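(* Fix $k\in\{0,1,\dots,9\}$ and even integers $A$ and $B$. Then there exist $\hat\kappa,\beta,d_1,\dots,d_k$ in the K3 lattice $L$ such that $(\hat\kappa,\hat\kappa)=B$, $(\beta,\beta)=A$, $(\hat\kappa,\beta)=0$, $(\hat\kappa,d_i)=1$ and $(\beta,d_i)=0$ for all $i$, and $(d_i,d_j)=-2\delta_{ij}$ for all $i,j$; moreover, $\hat\kappa,\beta,d_1,\dots,d_k$ generate a primitive sublattice of $L$.
   Context: The K3 lattice $L$ is the even unimodular lattice of signature $(3,19)$, with its symmetric bilinear form $(\cdot,\cdot)$. A sublattice $S\subset L$ is primitive if $L/S$ is torsion-free, i.e. every element of $L$ lying in $S\otimes\mathbb{R}$ lies in $S$. *)

theory Defs
  imports Main
begin

text \<open>Concrete model of the K3 lattice L = U^3 (+) E8(-1)^2 on Z^22.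
  Vectors are functions nat => int supported on {0..<22}.
  Coordinates 0..5: three hyperbolic planes U (pairs {0,1},{2,3},{4,5});
  coordinates 6..13 and 14..21: two copies of E8(-1).\<close>

definition e8_adj :: "nat \<Rightarrow> nat \<Rightarrow> bool" where
  "e8_adj i j \<longleftrightarrow> i < 8 \<and> j < 8 \<and>
     ((i + 1 = j \<and> j \<le> 6) \<or> (j + 1 = i \<and> i \<le> 6) \<or> (i = 4 \<and> j = 7) \<or> (i = 7 \<and> j = 4))"

definition e8m_gram :: "nat \<Rightarrow> nat \<Rightarrow> int" where
  "e8m_gram i j = (if i = j then -2 else if e8_adj i j then 1 else 0)"

definition k3_gram :: "nat \<Rightarrow> nat \<Rightarrow> int" where
  "k3_gram i j =
    (if i < 6 \<and> j < 6 then (if i div 2 = j div 2 \<and> i \<noteq> j then 1 else 0)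
     else if 6 \<le> i \<and> i < 14 \<and> 6 \<le> j \<and> j < 14 then e8m_gram (i - 6) (j - 6)
     else if 14 \<le> i \<and> i < 22 \<and> 14 \<le> j \<and> j < 22 then e8m_gram (i - 14) (j - 14)
     else 0)"

definition k3_lattice :: "(nat \<Rightarrow> int) set" where
  "k3_lattice = {x. \<forall>i\<ge>22. x i = 0}"

definition k3_form :: "(nat \<Rightarrow> int) \<Rightarrow> (nat \<Rightarrow> int) \<Rightarrow> int" where
  "k3_form x y = (\<Sum>i<22. \<Sum>j<22. x i * k3_gram i j * y j)"

definition lattice_span :: "(nat \<Rightarrow> int) list \<Rightarrow> (nat \<Rightarrow> int) set" where
  "lattice_span vs = {(\<lambda>i. \<Sum>j<length vs. c j * (vs ! j) i) | c :: nat \<Rightarrow> int. True}"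

definition k3_primitive :: "(nat \<Rightarrow> int) set \<Rightarrow> bool" where
  "k3_primitive S \<longleftrightarrow> S \<subseteq> k3_lattice \<and>
     (\<forall>x\<in>k3_lattice. \<forall>n::int. n \<noteq> 0 \<and> (\<lambda>i. n * x i) \<in> S \<longrightarrow> x \<in> S)"

end

theory Submission
  imports Defs "HOL-Library.Function_Algebras"
begin

text \<open>Write \<open>e\<^sub>i\<close> for the coordinate vectors. The roots \<open>e\<^sub>p\<close> at the nodes 0, 2, 4, 6 of
  both copies of \<open>E\<^sub>8(-1)\<close>, together with \<open>e\<^sub>4 - e\<^sub>5\<close> in the third hyperbolic plane, are nine
  mutually orthogonal \<open>(-2)\<close>-vectors. The vector
  \<open>\<kappa> = e\<^sub>0 + m e\<^sub>1 + e\<^sub>5 + e\<^sub>7 + e\<^sub>1\<^sub>1 + e\<^sub>1\<^sub>5 + e\<^sub>1\<^sub>9\<close> (nodes 1 and 5 of each \<open>E\<^sub>8\<close> copy, each adjacent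
  to two of the chosen roots) pairs to 1 with all of them and has square \<open>2m - 8\<close>, while
  \<open>\<beta> = e\<^sub>2 + a e\<^sub>3\<close> lives in the second hyperbolic plane, orthogonal to everything else, with
  square \<open>2a\<close>. Primitivity holds because every generator has a pivot coordinate where it is 1
  and all other generators vanish, so the coefficients of an element of the span can be read
  off from its coordinates.\<close>

definition k3_single :: "nat \<Rightarrow> int \<Rightarrow> nat \<Rightarrow> int" where
  "k3_single p c = (\<lambda>i. if i = p then c else 0)"

lemma k3_form_add_left: "k3_form (x + y) z = k3_form x z + k3_form y z"
  by (simp add: k3_form_def algebra_simps sum.distrib)

lemma k3_form_add_right: "k3_form z (x + y) = k3_form z x + k3_form z y"
  by (simp add: k3_form_def algebra_simps sum.distrib)

lemma k3_form_single:
  assumes "p < 22" and "q < 22"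
  shows "k3_form (k3_single p c) (k3_single q c') = c * k3_gram p q * c'"
  using assms
  by (simp add: k3_form_def k3_single_def if_distrib[of "times _"] if_distrib[of "\<lambda>x. x * _"]
      sum.delta' cong: if_cong)

lemma k3_single_in_lattice: "p < 22 \<Longrightarrow> k3_single p c \<in> k3_lattice"
  by (simp add: k3_lattice_def k3_single_def)

lemma k3_lattice_add: "x \<in> k3_lattice \<Longrightarrow> y \<in> k3_lattice \<Longrightarrow> x + y \<in> k3_lattice"
  by (simp add: k3_lattice_def)

lemma lattice_span_subset_k3_lattice:
  assumes "set vs \<subseteq> k3_lattice"
  shows "lattice_span vs \<subseteq> k3_lattice"
proof
  fix x assume "x \<in> lattice_span vs"
  then obtain c where x: "x = (\<lambda>i. \<Sum>j<length vs. c j * (vs ! j) i)"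
    unfolding lattice_span_def by blast
  have "(vs ! j) i = 0" if "j < length vs" and "22 \<le> i" for i j
    using assms nth_mem[OF that(1)] that(2) unfolding k3_lattice_def by blast
  then show "x \<in> k3_lattice" unfolding x k3_lattice_def by simp
qed

lemma k3_primitive_lattice_span_if_pivots:
  assumes lattice: "set vs \<subseteq> k3_lattice"
    and pivots: "\<And>j l. j < length vs \<Longrightarrow> l < length vs \<Longrightarrow>
                   (vs ! l) (piv j) = (if j = l then 1 else 0)"
  shows "k3_primitive (lattice_span vs)"
  unfolding k3_primitive_def
proof (intro conjI ballI allI impI lattice_span_subset_k3_lattice[OF lattice])
  fix x and n :: int
  assume "n \<noteq> 0 \<and> (\<lambda>i. n * x i) \<in> lattice_span vs"
  then obtain c where "n \<noteq> 0" and "(\<lambda>i. n * x i) = (\<lambda>i. \<Sum>j<length vs. c j * (vs ! j) i)"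
    unfolding lattice_span_def by blast
  then have nx: "n * x i = (\<Sum>j<length vs. c j * (vs ! j) i)" for i
    by (metis (no_types) fun_cong)
  have coeff: "c l = n * x (piv l)" if "l < length vs" for l
  proof -
    have "n * x (piv l) = (\<Sum>j<length vs. if j = l then c j else 0)"
      unfolding nx by (intro sum.cong refl) (simp add: pivots that)
    then show ?thesis using that by simp
  qed
  have expansion: "x = (\<lambda>i. \<Sum>j<length vs. x (piv j) * (vs ! j) i)"
  proof
    fix i
    have "n * x i = n * (\<Sum>j<length vs. x (piv j) * (vs ! j) i)"
      unfolding nx sum_distrib_left by (intro sum.cong refl) (simp add: coeff)
    then show "x i = (\<Sum>j<length vs. x (piv j) * (vs ! j) i)" using \<open>n \<noteq> 0\<close> by simp
  qed
  show "x \<in> lattice_span vs"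
    unfolding lattice_span_def
    by (rule CollectI, rule exI[of _ "\<lambda>j. x (piv j)"], rule conjI[OF expansion TrueI])
qed

definition kappa_vec :: "int \<Rightarrow> nat \<Rightarrow> int" where
  "kappa_vec m = k3_single 0 1 + k3_single 1 m + k3_single 5 1 + k3_single 7 1
     + k3_single 11 1 + k3_single 15 1 + k3_single 19 1"

definition beta_vec :: "int \<Rightarrow> nat \<Rightarrow> int" where
  "beta_vec a = k3_single 2 1 + k3_single 3 a"

definition root_vec :: "nat \<Rightarrow> nat \<Rightarrow> int" where
  "root_vec j = (if j < 8 then k3_single ([6, 8, 10, 12, 14, 16, 18, 20] ! j) 1
                 else k3_single 4 1 + k3_single 5 (-1))"

definition witness_pivot :: "nat \<Rightarrow> nat" where
  "witness_pivot j = [0, 2, 6, 8, 10, 12, 14, 16, 18, 20, 4] ! j"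

lemmas k3_form_expand = k3_form_add_left k3_form_add_right k3_form_single
  k3_gram_def e8m_gram_def e8_adj_def

lemma all_less_9_nat:
  "(\<forall>i<(9::nat). P i) \<longleftrightarrow> P 0 \<and> P 1 \<and> P 2 \<and> P 3 \<and> P 4 \<and> P 5 \<and> P 6 \<and> P 7 \<and> P 8"
  by (simp add: numeral_eq_Suc All_less_Suc conj_ac)

lemma k3_form_kappa_vec: "k3_form (kappa_vec m) (kappa_vec m) = 2 * m - 8"
  by (simp add: kappa_vec_def k3_form_expand)

lemma k3_form_beta_vec: "k3_form (beta_vec a) (beta_vec a) = 2 * a"
  by (simp add: beta_vec_def k3_form_expand)

lemma k3_form_kappa_beta: "k3_form (kappa_vec m) (beta_vec a) = 0"
  by (simp add: kappa_vec_def beta_vec_def k3_form_expand)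

lemma k3_form_kappa_beta_root:
  "\<forall>i<9. k3_form (kappa_vec m) (root_vec i) = 1 \<and> k3_form (beta_vec a) (root_vec i) = 0"
  unfolding all_less_9_nat by (simp add: kappa_vec_def beta_vec_def root_vec_def k3_form_expand)

lemma k3_form_root_root:
  "\<forall>i<9. \<forall>j<9. k3_form (root_vec i) (root_vec j) = (if i = j then -2 else 0)"
  unfolding all_less_9_nat by (simp add: root_vec_def k3_form_expand)

lemma witnesses_in_k3_lattice:
  "set (kappa_vec m # beta_vec a # map root_vec [0..<9]) \<subseteq> k3_lattice"
  by (simp add: kappa_vec_def beta_vec_def root_vec_def k3_single_in_lattice k3_lattice_add
      numeral_eq_Suc)

lemma witness_pivots:
  "\<forall>j<11. \<forall>l<11.
     ((kappa_vec m # beta_vec a # map root_vec [0..<9]) ! l) (witness_pivot j) =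
     (if j = l then 1 else 0)"
  by (simp add: kappa_vec_def beta_vec_def root_vec_def witness_pivot_def k3_single_def
      numeral_eq_Suc All_less_Suc)

lemma k3_primitive_witness_span:
  assumes "k \<le> 9"
  shows "k3_primitive (lattice_span (kappa_vec m # beta_vec a # map root_vec [0..<k]))"
proof -
  let ?all = "kappa_vec m # beta_vec a # map root_vec [0..<9]"
  have "kappa_vec m # beta_vec a # map root_vec [0..<k] = take (k + 2) ?all"
    using assms by (simp add: take_map)
  moreover have "k3_primitive (lattice_span (take (k + 2) ?all))"
  proof (rule k3_primitive_lattice_span_if_pivots)
    show "set (take (k + 2) ?all) \<subseteq> k3_lattice"
      using witnesses_in_k3_lattice set_take_subset by (rule order_trans[rotated])
    show "(take (k + 2) ?all ! l) (witness_pivot j) = (if j = l then 1 else 0)"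
      if "j < length (take (k + 2) ?all)" and "l < length (take (k + 2) ?all)" for j l
    proof -
      have "j < 11" "l < 11" "l < k + 2"
        using that assms by auto
      then show ?thesis
        unfolding nth_take[OF \<open>l < k + 2\<close>] using witness_pivots by blast
    qed
  qed
  ultimately show ?thesis by simp
qed

theorem lemma4p5:
  fixes k :: nat and A B :: int
  assumes "k \<le> 9" and "even A" and "even B"
  shows "\<exists>\<kappa> \<beta> (d :: nat \<Rightarrow> nat \<Rightarrow> int).
           \<kappa> \<in> k3_lattice \<and> \<beta> \<in> k3_lattice \<and> (\<forall>i<k. d i \<in> k3_lattice) \<and>
           k3_form \<kappa> \<kappa> = B \<and> k3_form \<beta> \<beta> = A \<and> k3_form \<kappa> \<beta> = 0 \<and>
           (\<forall>i<k. k3_form \<kappa> (d i) = 1 \<and> k3_form \<beta> (d i) = 0) \<and>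
           (\<forall>i<k. \<forall>j<k. k3_form (d i) (d j) = (if i = j then -2 else 0)) \<and>
           k3_primitive (lattice_span (\<kappa> # \<beta> # map d [0..<k]))"
proof (intro exI conjI)
  let ?m = "B div 2 + 4" and ?a = "A div 2"
  show "kappa_vec ?m \<in> k3_lattice" "beta_vec ?a \<in> k3_lattice" "\<forall>i<k. root_vec i \<in> k3_lattice"
    using witnesses_in_k3_lattice[of ?m ?a] \<open>k \<le> 9\<close> by auto
  show "k3_form (kappa_vec ?m) (kappa_vec ?m) = B"
    using \<open>even B\<close> by (auto simp: k3_form_kappa_vec elim!: evenE)
  show "k3_form (beta_vec ?a) (beta_vec ?a) = A"
    using \<open>even A\<close> by (auto simp: k3_form_beta_vec elim!: evenE)
  show "k3_form (kappa_vec ?m) (beta_vec ?a) = 0"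
    by (rule k3_form_kappa_beta)
  show "\<forall>i<k. k3_form (kappa_vec ?m) (root_vec i) = 1 \<and> k3_form (beta_vec ?a) (root_vec i) = 0"
    using k3_form_kappa_beta_root \<open>k \<le> 9\<close> by auto
  show "\<forall>i<k. \<forall>j<k. k3_form (root_vec i) (root_vec j) = (if i = j then -2 else 0)"
    using k3_form_root_root \<open>k \<le> 9\<close> by auto
  show "k3_primitive (lattice_span (kappa_vec ?m # beta_vec ?a # map root_vec [0..<k]))"
    using \<open>k \<le> 9\<close> by (rule k3_primitive_witness_span)
qed

end
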